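(* There are only finitely many (up to isomorphism) finite simple graphs $G$ with chromatic number $\chi(G)=3$ whose adjacency matrix is non-singular and which satisfy $\mathcal{E}(G)<n-1+\bar d$, where $n$ is the order of $G$.
   Context: For a finite simple graph $G$ with $n$ vertices and $m$ edges, $A(G)$ is its adjacency matrix with eigenvalues $\lambda_1\ge\cdots\ge\lambda_n$, and the energy is $\mathcal{E}(G)=\sum_{i=1}^n|\lambda_i|$. $\bar d=2m/n$ is the average degree. *)

theory Defs
  imports Complex_Main "Jordan_Normal_Form.Char_Poly"
begin

text \<open>A finite simple graph with vertex set {0..<n}, given by an edge predicate E
  which is symmetric, irreflexive and only relates vertices below n.
  Every finite simple graph is isomorphic to such a graph.\<close>

definition simple_graph :: "nat \<Rightarrow> (nat \<Rightarrow> nat \<Rightarrow> bool) \<Rightarrow> bool" where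
  "simple_graph n E \<longleftrightarrow>
     (\<forall>i j. E i j \<longrightarrow> i < n \<and> j < n) \<and> (\<forall>i j. E i j \<longrightarrow> E j i) \<and> (\<forall>i. \<not> E i i)"

definition graph_iso :: "nat \<Rightarrow> (nat \<Rightarrow> nat \<Rightarrow> bool) \<Rightarrow> nat \<Rightarrow> (nat \<Rightarrow> nat \<Rightarrow> bool) \<Rightarrow> bool" where
  "graph_iso n E n' E' \<longleftrightarrow>
     (\<exists>f. bij_betw f {0..<n} {0..<n'} \<and> (\<forall>i<n. \<forall>j<n. E i j \<longleftrightarrow> E' (f i) (f j)))"

definition colorable :: "nat \<Rightarrow> (nat \<Rightarrow> nat \<Rightarrow> bool) \<Rightarrow> nat \<Rightarrow> bool" where
  "colorable n E k \<longleftrightarrow>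
     (\<exists>c. (\<forall>i<n. c i < k) \<and> (\<forall>i<n. \<forall>j<n. E i j \<longrightarrow> c i \<noteq> c j))"

definition chromatic_number :: "nat \<Rightarrow> (nat \<Rightarrow> nat \<Rightarrow> bool) \<Rightarrow> nat" where
  "chromatic_number n E = (LEAST k. colorable n E k)"

definition num_edges :: "nat \<Rightarrow> (nat \<Rightarrow> nat \<Rightarrow> bool) \<Rightarrow> nat" where
  "num_edges n E = card {(i, j). i < j \<and> j < n \<and> E i j}"

definition avg_degree :: "nat \<Rightarrow> (nat \<Rightarrow> nat \<Rightarrow> bool) \<Rightarrow> real" where
  "avg_degree n E = 2 * real (num_edges n E) / real n"

definition adj_matrix :: "nat \<Rightarrow> (nat \<Rightarrow> nat \<Rightarrow> bool) \<Rightarrow> real mat" where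
  "adj_matrix n E = mat n n (\<lambda>(i, j). if E i j then 1 else 0)"

text \<open>Energy: sum of absolute values of all eigenvalues counted with (algebraic)
  multiplicity, i.e. over the complex roots of the characteristic polynomial.\<close>

definition energy :: "nat \<Rightarrow> (nat \<Rightarrow> nat \<Rightarrow> bool) \<Rightarrow> real" where
  "energy n E =
     (let p = char_poly (map_mat complex_of_real (adj_matrix n E))
      in \<Sum>z\<in>{z. poly p z = 0}. real (order z p) * cmod z)"

end

theory Submission
  imports Defs "Jordan_Normal_Form.Schur_Decomposition"
begin

text \<open>
  Let \<open>x\<^sub>1, \<dots>, x\<^sub>n\<close> be the eigenvalues of \<open>A(G)\<close>, read off a Schur triangularisation,
  and \<open>a\<^sub>i = |x\<^sub>i|\<close>. Then \<open>\<Sum> x\<^sub>i = tr A = 0\<close>, \<open>\<Sum> x\<^sub>i\<^sup>2 = tr A\<^sup>2 = 2m\<close>, and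
  \<open>\<Prod> a\<^sub>i = |det A| \<ge> 1\<close> because \<open>det A\<close> is a non-zero integer. A 3-colouring has a colour
  class with at least \<open>n/3\<close> vertices, which forces \<open>2m \<le> 8n\<^sup>2/9\<close>. If \<open>\<E>(G) < n - 1 + 2m/n\<close>,
  then \<open>2a\<^sub>i \<le> \<E>(G)\<close> gives \<open>a\<^sub>i \<le> 17n/18\<close>, and for such \<open>a\<close> and large \<open>n\<close>
  the elementary inequality \<open>n - 1 + (n - 2) ln a + a\<^sup>2 \<le> n a\<close> holds. Summing it over
  \<open>i\<close> and using \<open>\<Sum> ln a\<^sub>i \<ge> 0\<close>, \<open>\<Sum> a\<^sub>i\<^sup>2 \<ge> 2m\<close> yields \<open>n(n - 1) + 2m \<le> n \<E>(G)\<close>,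
  a contradiction. So every such graph has fewer than 3000 vertices.
\<close>

definition trace_mat :: "'a::comm_ring_1 mat \<Rightarrow> 'a" where
  "trace_mat A = (\<Sum>i<dim_row A. A $$ (i, i))"

lemma trace_mat_eq_sum_list_diag_mat: "trace_mat A = sum_list (diag_mat A)"
  by (simp add: trace_mat_def diag_mat_def interv_sum_list_conv_sum_set_nat atLeast0LessThan)

lemma trace_mat_mult_comm:
  assumes "A \<in> carrier_mat n m" and "B \<in> carrier_mat m n"
  shows "trace_mat (A * B) = trace_mat (B * A)"
proof -
  have "trace_mat (A * B) = (\<Sum>i<n. \<Sum>k<m. A $$ (i, k) * B $$ (k, i))"
    using assms by (simp add: trace_mat_def scalar_prod_def atLeast0LessThan)
  also have "\<dots> = (\<Sum>k<m. \<Sum>i<n. B $$ (k, i) * A $$ (i, k))"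
    by (subst sum.swap) (simp add: mult.commute)
  also have "\<dots> = trace_mat (B * A)"
    using assms by (simp add: trace_mat_def scalar_prod_def atLeast0LessThan)
  finally show ?thesis .
qed

lemma trace_mat_similar:
  assumes "similar_mat A B"
  shows "trace_mat A = trace_mat B"
proof -
  obtain n P Q where carrier: "{A, B, P, Q} \<subseteq> carrier_mat n n"
    and QP: "Q * P = 1\<^sub>m n" and A: "A = P * B * Q"
    using similar_matD[OF assms] by blast
  then have "trace_mat A = trace_mat (Q * (P * B))"
    using trace_mat_mult_comm[of "P * B" n n Q] by auto
  also have "Q * (P * B) = B"
    using carrier QP by (auto simp: assoc_mult_mat[symmetric, of Q n n P n B n])
  finally show ?thesis .
qed

lemma upper_triangular_mult_diag:
  assumes A: "A \<in> carrier_mat n n" and B: "B \<in> carrier_mat n n"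
    and "upper_triangular A" and "upper_triangular B" and i: "i < n"
  shows "(A * B) $$ (i, i) = A $$ (i, i) * B $$ (i, i)"
proof -
  have "(A * B) $$ (i, i) = (\<Sum>k\<in>{0..<n}. A $$ (i, k) * B $$ (k, i))"
    using A B i by (simp add: scalar_prod_def)
  also have "\<dots> = (\<Sum>k\<in>{i}. A $$ (i, k) * B $$ (k, i))"
  proof (rule sum.mono_neutral_right)
    show "\<forall>k\<in>{0..<n} - {i}. A $$ (i, k) * B $$ (k, i) = 0"
    proof
      fix k assume "k \<in> {0..<n} - {i}"
      then consider "k < i" | "i < k" "k < n" by force
      then show "A $$ (i, k) * B $$ (k, i) = 0"
        by cases (use assms in \<open>simp_all add: upper_triangularD\<close>)
    qed
  qed (use i in auto)
  finally show ?thesis by simp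
qed

lemma similar_mat_square:
  assumes "similar_mat A B"
  shows "similar_mat (A * A) (B * B)"
proof -
  obtain P Q where "similar_mat_wit A B P Q"
    using assms unfolding similar_mat_def by blast
  then have "similar_mat (A ^\<^sub>m 2) (B ^\<^sub>m 2)"
    unfolding similar_mat_def by (blast intro: similar_mat_wit_pow)
  moreover obtain n where "A \<in> carrier_mat n n" "B \<in> carrier_mat n n"
    using similar_matD[OF assms] by auto
  ultimately show ?thesis by (simp add: numeral_2_eq_2)
qed

lemma complex_mat_eigenvalue_list:
  fixes A :: "complex mat"
  assumes A: "A \<in> carrier_mat n n"
  obtains es where "length es = n" and "char_poly A = (\<Prod>e\<leftarrow>es. [:- e, 1:])"
    and "sum_list es = trace_mat A" and "(\<Sum>e\<leftarrow>es. e\<^sup>2) = trace_mat (A * A)"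
    and "prod_list es = det A"
proof -
  obtain as where "char_poly A = (\<Prod>a\<leftarrow>as. [:- a, 1:])"
    using char_poly_factorized[OF A] by blast
  then obtain B where B: "B \<in> carrier_mat n n" and ut: "upper_triangular B"
    and sim: "similar_mat A B"
    using schur_decomposition_exists[OF A] by blast
  define es where "es = diag_mat B"
  have "length es = n"
    using B by (simp add: es_def diag_mat_def)
  moreover have "char_poly A = (\<Prod>e\<leftarrow>es. [:- e, 1:])"
    using char_poly_similar[OF sim] char_poly_upper_triangular[OF B ut] by (simp add: es_def)
  moreover have "sum_list es = trace_mat A"
    using trace_mat_similar[OF sim] by (simp add: es_def trace_mat_eq_sum_list_diag_mat)
  moreover have "(\<Sum>e\<leftarrow>es. e\<^sup>2) = trace_mat (A * A)"
  proof -
    have "trace_mat (A * A) = trace_mat (B * B)"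
      using trace_mat_similar[OF similar_mat_square[OF sim]] .
    also have "\<dots> = (\<Sum>i<n. (B $$ (i, i))\<^sup>2)"
      unfolding trace_mat_def using B upper_triangular_mult_diag[OF B B ut ut]
      by (auto simp: power2_eq_square intro: sum.cong)
    also have "\<dots> = (\<Sum>e\<leftarrow>es. e\<^sup>2)"
      using B by (simp add: es_def diag_mat_def interv_sum_list_conv_sum_set_nat atLeast0LessThan)
    finally show ?thesis ..
  qed
  moreover have "prod_list es = det A"
    using det_similar[OF sim] det_upper_triangular[OF ut B] by (simp add: es_def)
  ultimately show ?thesis using that by blast
qed

lemma order_prod_linear_factors:
  "Polynomial.order z (\<Prod>e\<leftarrow>es. [:- e, 1:]) = count_list es (z :: 'a::idom)"
proof -
  have "Polynomial.order z (\<Prod>e\<leftarrow>es. [:- e, 1:]) = (\<Sum>e\<leftarrow>es. if e = z then 1 else 0)"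
    by (subst order_prod_list) (auto simp: order_linear' o_def)
  also have "\<dots> = count_list es z"
    by (induction es) auto
  finally show ?thesis .
qed

lemma sum_count_list_eq_sum_list:
  fixes f :: "'a \<Rightarrow> 'b::comm_semiring_1"
  assumes "finite X" and "set xs \<subseteq> X"
  shows "(\<Sum>x\<in>X. of_nat (count_list xs x) * f x) = (\<Sum>x\<leftarrow>xs. f x)"
  using assms(2)
proof (induction xs)
  case (Cons a xs)
  have "of_nat (count_list (a # xs) x) * f x
      = of_nat (count_list xs x) * f x + (if x = a then f a else 0)" for x
    by (simp add: distrib_right add.commute)
  then show ?case
    using Cons assms(1) by (simp add: sum.distrib add.commute)
qed simp

lemma sum_roots_prod_linear_factors:
  fixes f :: "'a::idom \<Rightarrow> 'b::comm_semiring_1"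
  shows "(\<Sum>z | poly (\<Prod>e\<leftarrow>es. [:- e, 1:]) z = 0.
            of_nat (Polynomial.order z (\<Prod>e\<leftarrow>es. [:- e, 1:])) * f z) = (\<Sum>e\<leftarrow>es. f e)"
proof -
  have "{z. poly (\<Prod>e\<leftarrow>es. [:- e, 1:]) z = 0} = set es"
    by (auto simp: poly_prod_list_zero_iff)
  then show ?thesis
    by (simp add: order_prod_linear_factors sum_count_list_eq_sum_list)
qed

text \<open>A type-polymorphic copy of \<^const>\<open>adj_matrix\<close>, so that the same matrix can be read
  over \<open>\<int>\<close> (for the determinant) and over \<open>\<complex>\<close> (for the spectrum).\<close>

definition adjacency_mat :: "nat \<Rightarrow> (nat \<Rightarrow> nat \<Rightarrow> bool) \<Rightarrow> 'a::zero_neq_one mat" where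
  "adjacency_mat n E = mat n n (\<lambda>(i, j). if E i j then 1 else 0)"

definition adj_pairs :: "nat \<Rightarrow> (nat \<Rightarrow> nat \<Rightarrow> bool) \<Rightarrow> (nat \<times> nat) set" where
  "adj_pairs n E = {(i, j). i < n \<and> j < n \<and> E i j}"

lemma adj_matrix_eq_adjacency_mat: "adj_matrix n E = adjacency_mat n E"
  by (simp add: adj_matrix_def adjacency_mat_def)

lemma adjacency_mat_carrier [simp]: "adjacency_mat n E \<in> carrier_mat n n"
  by (simp add: adjacency_mat_def)

lemma map_mat_adjacency_mat:
  assumes "f 0 = 0" and "f 1 = 1"
  shows "map_mat f (adjacency_mat n E) = adjacency_mat n E"
  using assms by (intro eq_matI) (auto simp: adjacency_mat_def)

lemma finite_adj_pairs: "finite (adj_pairs n E)"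
  by (rule finite_subset[of _ "{..<n} \<times> {..<n}"]) (auto simp: adj_pairs_def)

lemma card_adj_pairs:
  assumes "simple_graph n E"
  shows "card (adj_pairs n E) = 2 * num_edges n E"
proof -
  define U where "U = {(i, j). i < j \<and> j < n \<and> E i j}"
  have "adj_pairs n E = U \<union> prod.swap ` U"
    using assms by (auto simp: adj_pairs_def U_def simple_graph_def image_iff) (metis nat_neq_iff)
  moreover have "U \<inter> prod.swap ` U = {}"
    by (auto simp: U_def)
  moreover have "finite U"
    by (rule finite_subset[OF _ finite_adj_pairs[of n E]]) (auto simp: U_def adj_pairs_def)
  ultimately have "card (adj_pairs n E) = card U + card (prod.swap ` U)"
    by (simp add: card_Un_disjoint)
  also have "card (prod.swap ` U) = card U"
    by (simp add: card_image)
  finally show ?thesis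
    by (simp add: num_edges_def U_def)
qed

lemma trace_mat_adjacency_mat:
  assumes "simple_graph n E"
  shows "trace_mat (adjacency_mat n E :: 'a::comm_ring_1 mat) = 0"
  using assms by (simp add: trace_mat_def adjacency_mat_def simple_graph_def)

lemma trace_mat_adjacency_mat_square:
  assumes "simple_graph n E"
  shows "trace_mat (adjacency_mat n E * adjacency_mat n E :: 'a::comm_ring_1 mat)
    = of_nat (2 * num_edges n E)"
proof -
  have entry: "(if E i k then 1 else 0) * (if E k i then 1 else 0) = (if E i k then 1 else (0::'a))"
    for i k using assms by (auto simp: simple_graph_def)
  have "trace_mat (adjacency_mat n E * adjacency_mat n E :: 'a mat)
      = (\<Sum>i<n. \<Sum>k<n. if E i k then 1 else 0)"
    by (auto simp: trace_mat_def adjacency_mat_def scalar_prod_def atLeast0LessThan entry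
        intro!: sum.cong)
  also have "\<dots> = (\<Sum>p\<in>{..<n} \<times> {..<n}. if E (fst p) (snd p) then 1 else 0)"
    by (simp add: sum.cartesian_product case_prod_beta)
  also have "\<dots> = (\<Sum>p\<in>adj_pairs n E. 1)"
  proof -
    have "adj_pairs n E = {p \<in> {..<n} \<times> {..<n}. E (fst p) (snd p)}"
      by (auto simp: adj_pairs_def)
    then show ?thesis
      by (simp only:) (subst sum.inter_filter; simp)
  qed
  finally show ?thesis
    using card_adj_pairs[OF assms] by simp
qed

lemma abs_det_adj_matrix_ge_1:
  assumes "det (adj_matrix n E) \<noteq> 0"
  shows "1 \<le> \<bar>det (adj_matrix n E)\<bar>"
proof -
  have "det (adj_matrix n E) = of_int (det (adjacency_mat n E :: int mat))"
    using of_int_hom.hom_det[of "adjacency_mat n E"]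
    by (simp add: adj_matrix_eq_adjacency_mat map_mat_adjacency_mat)
  then show ?thesis
    using assms by auto
qed

lemma adj_matrix_eigenvalue_list:
  assumes "simple_graph n E"
  obtains es :: "complex list" where "length es = n" and "energy n E = (\<Sum>e\<leftarrow>es. cmod e)"
    and "sum_list es = 0" and "(\<Sum>e\<leftarrow>es. e\<^sup>2) = of_nat (2 * num_edges n E)"
    and "prod_list es = of_real (det (adj_matrix n E))"
proof -
  have A: "map_mat complex_of_real (adj_matrix n E) = adjacency_mat n E"
    by (simp add: adj_matrix_eq_adjacency_mat map_mat_adjacency_mat)
  obtain es where "length es = n"
    and char_poly: "char_poly (adjacency_mat n E :: complex mat) = (\<Prod>e\<leftarrow>es. [:- e, 1:])"
    and "sum_list es = trace_mat (adjacency_mat n E)"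
    and "(\<Sum>e\<leftarrow>es. e\<^sup>2) = trace_mat (adjacency_mat n E * adjacency_mat n E)"
    and "prod_list es = det (adjacency_mat n E)"
    using complex_mat_eigenvalue_list[OF adjacency_mat_carrier] by blast
  moreover have "energy n E = (\<Sum>e\<leftarrow>es. cmod e)"
    using sum_roots_prod_linear_factors[of es cmod] by (simp add: energy_def A char_poly)
  moreover have "det (adjacency_mat n E :: complex mat) = complex_of_real (det (adj_matrix n E))"
    by (metis A of_real_hom.hom_det)
  ultimately show ?thesis
    using that trace_mat_adjacency_mat[OF assms, where 'a=complex]
      trace_mat_adjacency_mat_square[OF assms, where 'a=complex] by simp
qed

lemma colorable_chromatic_number:
  assumes "simple_graph n E"
  shows "colorable n E (chromatic_number n E)"
proof -
  have "colorable n E n"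
    using assms unfolding simple_graph_def colorable_def by (intro exI[of _ id]) auto
  then show ?thesis
    unfolding chromatic_number_def by (rule LeastI)
qed

lemma pigeonhole_large_fiber:
  assumes "\<forall>i<n. c i < k"
  shows "\<exists>a. n \<le> k * card {i. i < n \<and> c i = a}"
proof (rule ccontr)
  define C where "C a = {i. i < n \<and> c i = a}" for a
  assume small: "\<not> ?thesis"
  then have "0 < n"
    by (metis le0 neq0_conv)
  then have "0 < k"
    using assms by auto
  have "{..<n} = (\<Union>a<k. C a)"
    using assms by (auto simp: C_def)
  then have "n \<le> (\<Sum>a<k. card (C a))"
    using card_UN_le[of "{..<k}" C] by (metis card_lessThan finite_lessThan)
  then have "k * n \<le> (\<Sum>a<k. k * card (C a))"
    by (simp add: sum_distrib_left[symmetric])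
  also have "\<dots> < (\<Sum>a<k. n)"
    using small \<open>0 < k\<close> by (intro sum_strict_mono) (auto simp: C_def not_le)
  finally show False
    by simp
qed

lemma colorable_imp_large_independent_set:
  assumes "colorable n E k"
  obtains I where "I \<subseteq> {..<n}" and "n \<le> k * card I" and "\<forall>i\<in>I. \<forall>j\<in>I. \<not> E i j"
proof -
  obtain c where "\<forall>i<n. c i < k" and proper: "\<forall>i<n. \<forall>j<n. E i j \<longrightarrow> c i \<noteq> c j"
    using assms unfolding colorable_def by blast
  then obtain a where "n \<le> k * card {i. i < n \<and> c i = a}"
    using pigeonhole_large_fiber by blast
  moreover have "\<forall>i\<in>{i. i < n \<and> c i = a}. \<forall>j\<in>{i. i < n \<and> c i = a}. \<not> E i j"
    using proper by (metis (mono_tags) mem_Collect_eq)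
  ultimately show ?thesis
    using that[of "{i. i < n \<and> c i = a}"] by auto
qed

lemma card_adj_pairs_independent_set:
  assumes "I \<subseteq> {..<n}" and "\<forall>i\<in>I. \<forall>j\<in>I. \<not> E i j"
  shows "card (adj_pairs n E) + (card I)\<^sup>2 \<le> n\<^sup>2"
proof -
  have "adj_pairs n E \<subseteq> {..<n} \<times> {..<n} - I \<times> I"
    using assms by (auto simp: adj_pairs_def)
  then have "card (adj_pairs n E) \<le> card ({..<n} \<times> {..<n} - I \<times> I)"
    by (intro card_mono) auto
  also have "\<dots> = n\<^sup>2 - (card I)\<^sup>2"
    using assms(1) finite_subset[OF assms(1)]
    by (subst card_Diff_subset) (auto simp: card_cartesian_product power2_eq_square)
  moreover have "(card I)\<^sup>2 \<le> n\<^sup>2"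
    using card_mono[OF _ assms(1)] by (simp add: power_mono)
  ultimately show ?thesis
    by linarith
qed

lemma card_adj_pairs_colorable:
  assumes "colorable n E k"
  shows "k\<^sup>2 * card (adj_pairs n E) \<le> (k\<^sup>2 - 1) * n\<^sup>2"
proof -
  obtain I where I_sub: "I \<subseteq> {..<n}" and "n \<le> k * card I"
    and I_indep: "\<forall>i\<in>I. \<forall>j\<in>I. \<not> E i j"
    by (rule colorable_imp_large_independent_set[OF assms])
  then have "n\<^sup>2 \<le> (k * card I)\<^sup>2"
    by (intro power_mono) simp_all
  then have "n\<^sup>2 \<le> k\<^sup>2 * (card I)\<^sup>2"
    by (simp only: power_mult_distrib)
  moreover have "k\<^sup>2 * (card (adj_pairs n E) + (card I)\<^sup>2) \<le> k\<^sup>2 * n\<^sup>2"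
    using card_adj_pairs_independent_set[OF I_sub I_indep] by (rule mult_le_mono2)
  ultimately have "k\<^sup>2 * card (adj_pairs n E) \<le> k\<^sup>2 * n\<^sup>2 - 1 * n\<^sup>2"
    unfolding add_mult_distrib2 by linarith
  then show ?thesis
    by (simp only: diff_mult_distrib)
qed

lemma two_norm_le_sum_norm_if_sum_eq_0:
  fixes x :: "'i \<Rightarrow> 'a::real_normed_vector"
  assumes "finite I" and "(\<Sum>i\<in>I. x i) = 0" and "j \<in> I"
  shows "2 * norm (x j) \<le> (\<Sum>i\<in>I. norm (x i))"
proof -
  have "x j = - (\<Sum>i\<in>I - {j}. x i)"
    using assms by (simp add: sum.remove eq_neg_iff_add_eq_0)
  then have "norm (x j) \<le> (\<Sum>i\<in>I - {j}. norm (x i))"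
    by (metis norm_minus_cancel norm_sum)
  then show ?thesis
    using assms by (simp add: sum.remove)
qed

lemma ln_square_le_linear:
  fixes a n :: real
  assumes "0 < a" and "2 \<le> n" and "a + 2 * sqrt a + 3 \<le> n"
  shows "n - 1 + (n - 2) * ln a + a\<^sup>2 \<le> n * a"
proof -
  define s where "s = sqrt a"
  have "0 < s" and a: "a = s\<^sup>2"
    using assms(1) by (simp_all add: s_def)
  have "ln a = 2 * ln s"
    using \<open>0 < s\<close> by (simp add: a ln_realpow)
  also have "\<dots> \<le> 2 * (s - 1)"
    using ln_le_minus_one[OF \<open>0 < s\<close>] by simp
  finally have "(n - 2) * ln a \<le> (n - 2) * (2 * (s - 1))"
    using assms(2) by (intro mult_left_mono) auto
  moreover have "s\<^sup>2 + 2 * s + 3 \<le> n"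
    using assms(1,3) by (simp add: s_def)
  then have "(s - 1)\<^sup>2 * (s\<^sup>2 + 2 * s + 3 - n) \<le> 0"
    by (intro mult_nonneg_nonpos) auto
  moreover have "n - 1 + (n - 2) * (2 * (s - 1)) + a\<^sup>2 - n * a
      = (s - 1)\<^sup>2 * (s\<^sup>2 + 2 * s + 3 - n)"
    by (simp add: a power2_eq_square algebra_simps)
  ultimately show ?thesis
    by linarith
qed

lemma pos_if_prod_ge_1:
  fixes a :: "'i \<Rightarrow> real"
  assumes "finite I" and "\<forall>i\<in>I. 0 \<le> a i" and "1 \<le> (\<Prod>i\<in>I. a i)" and "j \<in> I"
  shows "0 < a j"
proof (rule ccontr)
  assume "\<not> 0 < a j"
  then have "a j = 0"
    using assms(2,4) by force
  then have "(\<Prod>i\<in>I. a i) = 0"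
    using assms(1,4) by (intro prod_zero) auto
  then show False
    using assms(3) by simp
qed

lemma sum_ln_nonneg_if_prod_ge_1:
  fixes a :: "'i \<Rightarrow> real"
  assumes "finite I" and "\<And>i. i \<in> I \<Longrightarrow> 0 < a i" and "1 \<le> (\<Prod>i\<in>I. a i)"
  shows "0 \<le> (\<Sum>i\<in>I. ln (a i))"
proof -
  have "(\<Sum>i\<in>I. ln (a i)) = ln (\<Prod>i\<in>I. a i)"
    using assms(2) by (intro ln_prod[OF assms(1), symmetric]) force
  then show ?thesis
    using assms(3) by simp
qed

lemma sum_norm_lower_bound:
  fixes x :: "'i \<Rightarrow> 'a::real_normed_vector" and s :: real
  assumes fin: "finite I" and large: "3000 \<le> card I"
    and sum_eq_0: "(\<Sum>i\<in>I. x i) = 0" and prod_ge_1: "1 \<le> (\<Prod>i\<in>I. norm (x i))"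
    and s_le: "s \<le> (\<Sum>i\<in>I. (norm (x i))\<^sup>2)" and s_small: "9 * s \<le> 8 * (card I)\<^sup>2"
  shows "real (card I) - 1 + s / card I \<le> (\<Sum>i\<in>I. norm (x i))"
proof (rule ccontr)
  define n where "n = real (card I)"
  define T where "T = (\<Sum>i\<in>I. norm (x i))"
  assume "\<not> ?thesis"
  then have T_small: "T < n - 1 + s / n"
    by (simp add: n_def T_def)
  have n: "3000 \<le> n"
    using large by (simp add: n_def)
  have "s / n \<le> 8 * n / 9"
    using s_small n by (simp add: n_def field_simps power2_eq_square)
  have pos: "0 < norm (x i)" if "i \<in> I" for i
    using pos_if_prod_ge_1[OF fin _ prod_ge_1 that] by simp
  have pointwise: "n - 1 + (n - 2) * ln (norm (x i)) + (norm (x i))\<^sup>2 \<le> n * norm (x i)"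
    if "i \<in> I" for i
  proof (rule ln_square_le_linear)
    have "2 * norm (x i) \<le> T"
      unfolding T_def by (rule two_norm_le_sum_norm_if_sum_eq_0[OF fin sum_eq_0 that])
    then have "norm (x i) \<le> 17 * n / 18"
      using T_small \<open>s / n \<le> 8 * n / 9\<close> by linarith
    \<comment> \<open>from \<open>(sqrt a - 20)\<^sup>2 \<ge> 0\<close>; with it, any \<open>n \<ge> 2760\<close> would do\<close>
    moreover have "sqrt (norm (x i)) \<le> norm (x i) / 40 + 10"
      using zero_le_power2[of "sqrt (norm (x i)) - 20"]
      by (simp add: power2_eq_square algebra_simps)
    ultimately show "norm (x i) + 2 * sqrt (norm (x i)) + 3 \<le> n"
      using n by linarith
  qed (use pos that n in auto)
  have "(\<Sum>i\<in>I. n - 1 + (n - 2) * ln (norm (x i)) + (norm (x i))\<^sup>2)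
      \<le> (\<Sum>i\<in>I. n * norm (x i))"
    using pointwise by (rule sum_mono)
  then have "n * (n - 1) + (n - 2) * (\<Sum>i\<in>I. ln (norm (x i))) + (\<Sum>i\<in>I. (norm (x i))\<^sup>2)
      \<le> n * T"
    by (simp add: n_def T_def sum.distrib sum_distrib_left)
  moreover have "0 \<le> (n - 2) * (\<Sum>i\<in>I. ln (norm (x i)))"
    using sum_ln_nonneg_if_prod_ge_1[OF fin pos prod_ge_1] n by simp
  ultimately have "n * (n - 1) + s \<le> n * T"
    using s_le by linarith
  then show False
    using T_small n by (simp add: field_simps)
qed

lemma energy_ge_if_3_colorable:
  assumes G: "simple_graph n E" and "colorable n E 3" and "det (adj_matrix n E) \<noteq> 0"
    and "3000 \<le> n"
  shows "real n - 1 + avg_degree n E \<le> energy n E"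
proof -
  obtain es where len: "length es = n" and energy: "energy n E = (\<Sum>e\<leftarrow>es. cmod e)"
    and sum_eq_0: "sum_list es = 0" and squares: "(\<Sum>e\<leftarrow>es. e\<^sup>2) = of_nat (2 * num_edges n E)"
    and prod: "prod_list es = of_real (det (adj_matrix n E))"
    by (rule adj_matrix_eigenvalue_list[OF G])
  have "(\<Sum>i<n. es ! i) = 0"
    using sum_eq_0 len by (simp add: sum_list_sum_nth atLeast0LessThan)
  moreover have "1 \<le> (\<Prod>i<n. cmod (es ! i))"
  proof -
    have "(\<Prod>i<n. cmod (es ! i)) = \<bar>det (adj_matrix n E)\<bar>"
      using prod len by (simp add: prod_norm prod.list_conv_set_nth atLeast0LessThan)
    then show ?thesis
      using abs_det_adj_matrix_ge_1 assms(3) by simp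
  qed
  moreover have "real (2 * num_edges n E) \<le> (\<Sum>i<n. (cmod (es ! i))\<^sup>2)"
  proof -
    have "real (2 * num_edges n E) = (\<Sum>i<n. Re ((es ! i)\<^sup>2))"
      using arg_cong[OF squares, of Re] len by (simp add: sum_list_sum_nth atLeast0LessThan)
    also have "\<dots> \<le> (\<Sum>i<n. (cmod (es ! i))\<^sup>2)"
      by (intro sum_mono) (metis complex_Re_le_cmod norm_power)
    finally show ?thesis .
  qed
  moreover have "9 * real (2 * num_edges n E) \<le> 8 * n\<^sup>2"
    using card_adj_pairs_colorable[OF assms(2)] card_adj_pairs[OF G]
    by (simp flip: of_nat_mult of_nat_power)
  ultimately have "real n - 1 + real (2 * num_edges n E) / n \<le> (\<Sum>i<n. cmod (es ! i))"
    using sum_norm_lower_bound[of "{..<n}" "\<lambda>i. es ! i"] \<open>3000 \<le> n\<close> by simp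
  then show ?thesis
    using len by (simp add: energy avg_degree_def sum_list_sum_nth atLeast0LessThan)
qed

lemma graph_iso_refl: "graph_iso n E n E"
  unfolding graph_iso_def by (intro exI[of _ id]) auto

lemma finite_simple_graphs: "finite {(n, E). n < N \<and> simple_graph n E}"
proof -
  have "{(n, E). n < N \<and> simple_graph n E}
      \<subseteq> {..<N} \<times> (\<lambda>R i j. (i, j) \<in> R) ` Pow ({..<N} \<times> {..<N})"
  proof
    fix p
    assume "p \<in> {(n, E). n < N \<and> simple_graph n E}"
    then obtain n E where p: "p = (n, E)" and "n < N" and "simple_graph n E"
      by blast
    define R where "R = {(i, j). i < N \<and> j < N \<and> E i j}"
    have "E = (\<lambda>i j. (i, j) \<in> R)"
      using \<open>n < N\<close> \<open>simple_graph n E\<close> by (fastforce simp: R_def simple_graph_def)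
    moreover have "R \<in> Pow ({..<N} \<times> {..<N})"
      by (auto simp: R_def)
    ultimately show "p \<in> {..<N} \<times> (\<lambda>R i j. (i, j) \<in> R) ` Pow ({..<N} \<times> {..<N})"
      using p \<open>n < N\<close> by blast
  qed
  then show ?thesis
    by (rule finite_subset) auto
qed

theorem theorem3p4:
  shows "\<exists>S :: (nat \<times> (nat \<Rightarrow> nat \<Rightarrow> bool)) set. finite S \<and>
    (\<forall>n E. simple_graph n E \<and> chromatic_number n E = 3 \<and> det (adj_matrix n E) \<noteq> 0
       \<and> energy n E < real n - 1 + avg_degree n E
       \<longrightarrow> (\<exists>(n', E') \<in> S. graph_iso n E n' E'))"
proof (intro exI conjI allI impI)
  show "finite {(n, E). n < 3000 \<and> simple_graph n E}"
    by (rule finite_simple_graphs)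
next
  fix n E
  assume H: "simple_graph n E \<and> chromatic_number n E = 3 \<and> det (adj_matrix n E) \<noteq> 0
    \<and> energy n E < real n - 1 + avg_degree n E"
  have "n < 3000"
  proof (rule ccontr)
    assume "\<not> n < 3000"
    moreover have "colorable n E 3"
      using H colorable_chromatic_number by metis
    ultimately have "real n - 1 + avg_degree n E \<le> energy n E"
      using H by (intro energy_ge_if_3_colorable) auto
    then show False
      using H by linarith
  qed
  then show "\<exists>(n', E') \<in> {(n, E). n < 3000 \<and> simple_graph n E}. graph_iso n E n' E'"
    using H graph_iso_refl by blast
qed

end
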